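(* Let $X$, $Y$ be racks. (i) If there are $y_1\neq y_2\in Y$ and $x_1\neq x_2\in X$ with $y_1\triangleright y_2=y_2$ and $x_1\triangleright(x_2\triangleright(x_1\triangleright x_2))\neq x_2$, then the product rack $X\times Y$ is of type D. (ii) If there are pairwise distinct $y_1,\dots,y_4\in Y$ and $x_1,\dots,x_4\in X$ with $y_i\triangleright y_j=y_j$ and $x_i\triangleright x_j\neq x_j$ for all $i\neq j$, then $X\times Y$ is of type F. (iii) Let $X^{(2)}=X_1\sqcup X_2$, where $\varphi_i:X\to X_i$ are bijections onto disjoint sets, with rack structure $\varphi_i(x)\triangleright\varphi_j(y)=\varphi_j(x\triangleright y)$ for $i,j\in\{1,2\}$. If there are $x_1\neq x_2\in X$ with $x_1\triangleright(x_2\triangleright(x_1\triangleright x_2))\neq x_2$, then $X^{(2)}$ is of type D.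
   Context: Rack: nonempty set with operation $\triangleright$, each left translation bijective, self-distributive. The product rack has $(x,y)\triangleright(x',y')=(x\triangleright x',y\triangleright y')$. A subrack $Z$ is decomposable if $Z=R\sqcup S$ with nonempty subracks $R,S$, $Z\triangleright R=R$, $Z\triangleright S=S$. Type D: there is a decomposable subrack $R\sqcup S$ and $r\in R$, $s\in S$ with $r\triangleright(s\triangleright(r\triangleright s))\neq s$. Type F: there are pairwise disjoint subracks $R_1,\dots,R_4$, $r_a\in R_a$, with $R_a\triangleright R_b=R_b$ and $r_a\triangleright r_b\neq r_b$ for all $a\neq b$. *)

theory Defs
  imports Main
begin

text \<open>A rack is given by a carrier set and a binary operation on it
 (x \<triangleright> y written as op x y).\<close>

definition rack :: "'a set \<Rightarrow> ('a \<Rightarrow> 'a \<Rightarrow> 'a) \<Rightarrow> bool" where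
  "rack X op \<longleftrightarrow> X \<noteq> {}
     \<and> (\<forall>x\<in>X. \<forall>y\<in>X. op x y \<in> X)
     \<and> (\<forall>x\<in>X. bij_betw (op x) X X)
     \<and> (\<forall>x\<in>X. \<forall>y\<in>X. \<forall>z\<in>X. op x (op y z) = op (op x y) (op x z))"

definition subrack :: "'a set \<Rightarrow> 'a set \<Rightarrow> ('a \<Rightarrow> 'a \<Rightarrow> 'a) \<Rightarrow> bool" where
  "subrack Z X op \<longleftrightarrow> Z \<subseteq> X \<and> rack Z op"

definition act_set :: "('a \<Rightarrow> 'a \<Rightarrow> 'a) \<Rightarrow> 'a set \<Rightarrow> 'a set \<Rightarrow> 'a set" where
  "act_set op A B = {op a b | a b. a \<in> A \<and> b \<in> B}"

definition decomposition :: "'a set \<Rightarrow> ('a \<Rightarrow> 'a \<Rightarrow> 'a) \<Rightarrow> 'a set \<Rightarrow> 'a set \<Rightarrow> bool" where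
  "decomposition X op R S \<longleftrightarrow>
     subrack (R \<union> S) X op \<and> R \<inter> S = {} \<and>
     subrack R X op \<and> subrack S X op \<and>
     act_set op (R \<union> S) R = R \<and> act_set op (R \<union> S) S = S"

definition type_D :: "'a set \<Rightarrow> ('a \<Rightarrow> 'a \<Rightarrow> 'a) \<Rightarrow> bool" where
  "type_D X op \<longleftrightarrow> (\<exists>R S r s. decomposition X op R S \<and> r \<in> R \<and> s \<in> S \<and>
        op r (op s (op r s)) \<noteq> s)"

definition type_F :: "'a set \<Rightarrow> ('a \<Rightarrow> 'a \<Rightarrow> 'a) \<Rightarrow> bool" where
  "type_F X op \<longleftrightarrow> (\<exists>(R :: nat \<Rightarrow> 'a set) (r :: nat \<Rightarrow> 'a).
        (\<forall>a<4. subrack (R a) X op \<and> r a \<in> R a) \<and>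
        (\<forall>a<4. \<forall>b<4. a \<noteq> b \<longrightarrow>
            R a \<inter> R b = {} \<and> act_set op (R a) (R b) = R b \<and> op (r a) (r b) \<noteq> r b))"

definition prod_op :: "('a \<Rightarrow> 'a \<Rightarrow> 'a) \<Rightarrow> ('b \<Rightarrow> 'b \<Rightarrow> 'b) \<Rightarrow> 'a \<times> 'b \<Rightarrow> 'a \<times> 'b \<Rightarrow> 'a \<times> 'b" where
  "prod_op opX opY = (\<lambda>(x, y) (x', y'). (opX x x', opY y y'))"

end

theory Submission
  imports Defs
begin

(* (i), (ii): for a set G \<subseteq> Y of elements whose left translations commute, the
   orbit of y \<in> G under the group generated by these translations consists of
   elements translating exactly like y.  Hence orbits of elements of G act on each
   other, and two orbits are disjoint when one base point is fixed by the other
   generators.  Taking G = {y1, y2}, resp. G = {y1,..,y4}, the subsets X \<times> orbit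
   of the product rack give the required decomposition, resp. the four subracks
   of type F, while the X-coordinates provide the nontrivial actions.

   (iii): in the doubled rack, the translation by \<phi>i(x) acts on each copy Xj as
   the conjugate of the translation by x, so X1 \<squnion> X2 is itself decomposable. *)

lemma rack_closed: "rack Y op \<Longrightarrow> a \<in> Y \<Longrightarrow> b \<in> Y \<Longrightarrow> op a b \<in> Y"
  unfolding rack_def by blast

lemma rack_bij: "rack Y op \<Longrightarrow> a \<in> Y \<Longrightarrow> bij_betw (op a) Y Y"
  unfolding rack_def by blast

lemma rack_inj: "rack Y op \<Longrightarrow> a \<in> Y \<Longrightarrow> inj_on (op a) Y"
  by (rule bij_betw_imp_inj_on[OF rack_bij])

lemma rack_surj: "rack Y op \<Longrightarrow> a \<in> Y \<Longrightarrow> w \<in> Y \<Longrightarrow> \<exists>u\<in>Y. op a u = w"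
  using bij_betw_imp_surj_on[OF rack_bij, of Y op a] by (metis imageE)

lemma rack_self_distrib:
  "rack Y op \<Longrightarrow> a \<in> Y \<Longrightarrow> b \<in> Y \<Longrightarrow> c \<in> Y \<Longrightarrow> op a (op b c) = op (op a b) (op a c)"
  unfolding rack_def by blast

text \<open>Closure under the operation is implied by bijectivity of the translations.\<close>
lemma rack_intro:
  assumes "W \<noteq> {}" "\<forall>p\<in>W. bij_betw (op p) W W"
    and "\<forall>x\<in>W. \<forall>y\<in>W. \<forall>z\<in>W. op x (op y z) = op (op x y) (op x z)"
  shows "rack W op"
  using assms unfolding rack_def bij_betw_def by blast

text \<open>If a fixes b, then the translations by a and b commute
  (by self-distributivity, the translation by a \<triangleright> b is a conjugate).\<close>
lemma fixed_point_commute: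
  assumes "rack Y op" "a \<in> Y" "b \<in> Y" "op a b = b" "w \<in> Y"
  shows "op a (op b w) = op b (op a w)"
proof -
  have "op a (op b w) = op (op a b) (op a w)" using rack_self_distrib[OF assms(1-3,5)] .
  then show ?thesis using assms(4) by simp
qed

definition acts_on :: "('a \<Rightarrow> 'a \<Rightarrow> 'a) \<Rightarrow> 'a set \<Rightarrow> 'a set \<Rightarrow> bool" where
  "acts_on op D C \<longleftrightarrow> (\<forall>d\<in>D. bij_betw (op d) C C)"

lemma acts_on_Un_left: "acts_on op D C \<Longrightarrow> acts_on op D' C \<Longrightarrow> acts_on op (D \<union> D') C"
  unfolding acts_on_def by blast

lemma acts_on_Un_right:
  "acts_on op D A \<Longrightarrow> acts_on op D B \<Longrightarrow> A \<inter> B = {} \<Longrightarrow> acts_on op D (A \<union> B)"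
  unfolding acts_on_def using bij_betw_combine by blast

lemma act_set_acts_on:
  assumes "D \<noteq> {}" "acts_on op D C"
  shows "act_set op D C = C"
proof
  show "act_set op D C \<subseteq> C"
    using assms(2) unfolding act_set_def acts_on_def bij_betw_def by auto
  show "C \<subseteq> act_set op D C"
  proof
    fix c assume c: "c \<in> C"
    obtain d where d: "d \<in> D" using assms(1) by blast
    have "c \<in> op d ` C" using assms(2) d c unfolding acts_on_def bij_betw_def by auto
    then show "c \<in> act_set op D C" unfolding act_set_def using d by blast
  qed
qed

lemma subrack_of_acts_on:
  assumes "rack Y op" "C \<subseteq> Y" "C \<noteq> {}" "acts_on op C C"
  shows "subrack C Y op"
  unfolding subrack_def
proof
  show "rack C op"
  proof (rule rack_intro)
    show "\<forall>p\<in>C. bij_betw (op p) C C" using assms(4) unfolding acts_on_def .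
    show "\<forall>x\<in>C. \<forall>y\<in>C. \<forall>z\<in>C. op x (op y z) = op (op x y) (op x z)"
      using rack_self_distrib[OF assms(1)] assms(2) by blast
  qed (fact assms(3))
qed (fact assms(2))

lemma decomposition_intro:
  assumes W: "rack W op" and sub: "R \<subseteq> W" "S \<subseteq> W" and ne: "R \<noteq> {}" "S \<noteq> {}"
    and dis: "R \<inter> S = {}" and act: "acts_on op (R \<union> S) R" "acts_on op (R \<union> S) S"
  shows "decomposition W op R S"
proof -
  have RS: "R \<union> S \<subseteq> W" "R \<union> S \<noteq> {}" using sub ne by auto
  have "acts_on op R R" "acts_on op S S" using act unfolding acts_on_def by auto
  then have "subrack R W op" "subrack S W op"
    using subrack_of_acts_on[OF W sub(1) ne(1)] subrack_of_acts_on[OF W sub(2) ne(2)] by auto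
  moreover have "subrack (R \<union> S) W op"
    using subrack_of_acts_on[OF W RS acts_on_Un_right[OF act dis]] .
  moreover have "act_set op (R \<union> S) R = R" "act_set op (R \<union> S) S = S"
    using act_set_acts_on[OF RS(2) act(1)] act_set_acts_on[OF RS(2) act(2)] by auto
  ultimately show ?thesis unfolding decomposition_def using dis by auto
qed

lemma prod_op_pair [simp]: "prod_op opX opY (a, b) (c, d) = (opX a c, opY b d)"
  by (simp add: prod_op_def)

lemma prod_op_translation: "prod_op opX opY (x, y) = map_prod (opX x) (opY y)"
  by (auto simp: fun_eq_iff)

lemma acts_on_prod:
  assumes "rack X opX" "acts_on opY D C"
  shows "acts_on (prod_op opX opY) (X \<times> D) (X \<times> C)"
  unfolding acts_on_def
proof
  fix p assume "p \<in> X \<times> D"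
  then obtain x d where p: "p = (x, d)" "x \<in> X" "d \<in> D" by blast
  show "bij_betw (prod_op opX opY p) (X \<times> C) (X \<times> C)"
    using bij_betw_map_prod[OF rack_bij[OF assms(1) p(2)], of "opY d" C C] assms(2) p
    by (simp add: acts_on_def prod_op_translation)
qed

lemma rack_prod:
  assumes rX: "rack X opX" and rY: "rack Y opY"
  shows "rack (X \<times> Y) (prod_op opX opY)"
proof (rule rack_intro)
  show "X \<times> Y \<noteq> {}" using rX rY unfolding rack_def by blast
  show "\<forall>p\<in>X \<times> Y. bij_betw (prod_op opX opY p) (X \<times> Y) (X \<times> Y)"
    using acts_on_prod[OF rX, of opY Y Y] rY by (simp add: acts_on_def rack_def)
  show "\<forall>p\<in>X \<times> Y. \<forall>q\<in>X \<times> Y. \<forall>w\<in>X \<times> Y. prod_op opX opY p (prod_op opX opY q w) =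
      prod_op opX opY (prod_op opX opY p q) (prod_op opX opY p w)"
    using rack_self_distrib[OF rX] rack_self_distrib[OF rY] by auto
qed

lemma decomposition_prod:
  assumes rX: "rack X opX" and rY: "rack Y opY"
    and sub: "A \<subseteq> Y" "B \<subseteq> Y" and ne: "A \<noteq> {}" "B \<noteq> {}" and dis: "A \<inter> B = {}"
    and act: "acts_on opY (A \<union> B) A" "acts_on opY (A \<union> B) B"
  shows "decomposition (X \<times> Y) (prod_op opX opY) (X \<times> A) (X \<times> B)"
proof (rule decomposition_intro[OF rack_prod[OF rX rY]])
  have X: "X \<noteq> {}" using rX unfolding rack_def by blast
  show "X \<times> A \<noteq> {}" "X \<times> B \<noteq> {}" using X ne by auto
  show "X \<times> A \<subseteq> X \<times> Y" "X \<times> B \<subseteq> X \<times> Y" "X \<times> A \<inter> X \<times> B = {}" using sub dis by auto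
  have U: "X \<times> A \<union> X \<times> B = X \<times> (A \<union> B)" by auto
  show "acts_on (prod_op opX opY) (X \<times> A \<union> X \<times> B) (X \<times> A)"
       "acts_on (prod_op opX opY) (X \<times> A \<union> X \<times> B) (X \<times> B)"
    unfolding U using acts_on_prod[OF rX] act by auto
qed

subsection \<open>Orbits under commuting translations\<close>

text \<open>The orbit of y0 under the group generated by the translations by elements
  of G: closed under these translations and under their inverses.\<close>
inductive_set orbit :: "'a set \<Rightarrow> ('a \<Rightarrow> 'a \<Rightarrow> 'a) \<Rightarrow> 'a set \<Rightarrow> 'a \<Rightarrow> 'a set"
  for Y op G y0 where
  base: "y0 \<in> Y \<Longrightarrow> y0 \<in> orbit Y op G y0"
| translate: "z \<in> orbit Y op G y0 \<Longrightarrow> a \<in> G \<Longrightarrow> op a z \<in> orbit Y op G y0"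
| untranslate: "z \<in> orbit Y op G y0 \<Longrightarrow> a \<in> G \<Longrightarrow> u \<in> Y \<Longrightarrow> op a u = z
    \<Longrightarrow> u \<in> orbit Y op G y0"

lemma orbit_subset:
  assumes "rack Y op" "G \<subseteq> Y" shows "orbit Y op G y0 \<subseteq> Y"
proof
  fix z assume "z \<in> orbit Y op G y0"
  then show "z \<in> Y" using assms(2) by induct (auto intro: rack_closed[OF assms(1)])
qed

lemma orbit_acts_on:
  assumes r: "rack Y op" and G: "G \<subseteq> Y"
  shows "acts_on op G (orbit Y op G y0)"
  unfolding acts_on_def
proof
  fix a assume a: "a \<in> G"
  have aY: "a \<in> Y" using a G by auto
  have sub: "orbit Y op G y0 \<subseteq> Y" using orbit_subset[OF r G] .
  have "op a ` orbit Y op G y0 = orbit Y op G y0"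
  proof
    show "op a ` orbit Y op G y0 \<subseteq> orbit Y op G y0" using orbit.translate[OF _ a] by blast
    show "orbit Y op G y0 \<subseteq> op a ` orbit Y op G y0"
    proof
      fix z assume z: "z \<in> orbit Y op G y0"
      obtain u where u: "u \<in> Y" "op a u = z" using rack_surj[OF r aY] sub z by blast
      then show "z \<in> op a ` orbit Y op G y0" using orbit.untranslate[OF z a] by blast
    qed
  qed
  then show "bij_betw (op a) (orbit Y op G y0) (orbit Y op G y0)"
    using inj_on_subset[OF rack_inj[OF r aY] sub] unfolding bij_betw_def by blast
qed

text \<open>If the generators commute with y0, every element of the orbit translates
  exactly like y0: translations are conjugated along the orbit.\<close>
lemma orbit_translation:
  assumes r: "rack Y op" and G: "G \<subseteq> Y" and y0: "y0 \<in> Y"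
    and com: "\<forall>a\<in>G. \<forall>w\<in>Y. op y0 (op a w) = op a (op y0 w)"
    and z: "z \<in> orbit Y op G y0" and w: "w \<in> Y"
  shows "op z w = op y0 w"
  using z w
proof (induct arbitrary: w)
  case base then show ?case by simp
next
  case (translate z a)
  have aY: "a \<in> Y" and zY: "z \<in> Y" using translate orbit_subset[OF r G] G by auto
  obtain w' where w': "w' \<in> Y" "op a w' = w" using rack_surj[OF r aY translate(4)] by blast
  have "op (op a z) w = op a (op z w')" using rack_self_distrib[OF r aY zY w'(1)] w' by simp
  also have "\<dots> = op a (op y0 w')" using translate w' by simp
  also have "\<dots> = op y0 w" using com translate(3) w' by metis
  finally show ?case .
next
  case (untranslate z a u)
  have aY: "a \<in> Y" using untranslate G by auto
  have "op a (op u w) = op (op a u) (op a w)" using rack_self_distrib[OF r aY untranslate(4,6)] .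
  also have "\<dots> = op y0 (op a w)" using untranslate rack_closed[OF r aY] by simp
  also have "\<dots> = op a (op y0 w)" using com untranslate by simp
  finally show ?case
    using rack_inj[OF r aY] rack_closed[OF r] untranslate(4,6) y0 by (meson inj_onD)
qed

lemma orbit_of_fixed_point:
  assumes r: "rack Y op" and G: "G \<subseteq> Y" and fixed: "\<forall>a\<in>G. op a t = t"
    and z: "z \<in> orbit Y op G y0"
  shows "z = t \<longleftrightarrow> y0 = t"
  using z
proof induct
  case base then show ?case by simp
next
  case (translate z a)
  have "a \<in> Y" "z \<in> Y" using translate G orbit_subset[OF r G] by auto
  moreover have "t \<in> Y" if "y0 = t" using translate orbit_subset[OF r G] that by auto
  ultimately show ?case
    using translate fixed rack_inj[OF r] rack_closed[OF r] by (metis inj_onD)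
next
  case (untranslate z a u)
  have "a \<in> Y" using untranslate G by auto
  moreover have "t \<in> Y" if "u = t \<or> y0 = t"
    using untranslate orbit_subset[OF r G] that by auto
  ultimately show ?case using untranslate fixed rack_inj[OF r] by (metis inj_onD)
qed

definition commuting :: "'a set \<Rightarrow> ('a \<Rightarrow> 'a \<Rightarrow> 'a) \<Rightarrow> 'a set \<Rightarrow> bool" where
  "commuting Y op G \<longleftrightarrow> (\<forall>a\<in>G. \<forall>b\<in>G. \<forall>w\<in>Y. op a (op b w) = op b (op a w))"

lemma commuting_if_fixing:
  assumes "rack Y op" "G \<subseteq> Y" "\<forall>a\<in>G. \<forall>b\<in>G. a \<noteq> b \<longrightarrow> op a b = b \<or> op b a = a"
  shows "commuting Y op G"
  unfolding commuting_def using assms fixed_point_commute[OF assms(1)] by (metis subsetD)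

lemma orbits_act_on:
  assumes r: "rack Y op" and G: "G \<subseteq> Y" and com: "commuting Y op G"
    and u: "u \<in> G" and v: "v \<in> G"
  shows "acts_on op (orbit Y op G u) (orbit Y op G v)"
  unfolding acts_on_def
proof
  fix z assume z: "z \<in> orbit Y op G u"
  have "\<forall>w\<in>Y. op z w = op u w"
    using orbit_translation[OF r G _ _ z] u G com unfolding commuting_def by blast
  then show "bij_betw (op z) (orbit Y op G v) (orbit Y op G v)"
    using orbit_acts_on[OF r G] u orbit_subset[OF r G]
    unfolding acts_on_def by (metis bij_betw_cong subsetD)
qed

text \<open>If v is fixed by all generators other than itself, and u \<noteq> v, the orbits
  of u and v are disjoint: a common point would make u and v translate alike,
  so v would be fixed by all of G, hence a one-point orbit outside that of u.\<close>
lemma orbits_disjoint: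
  assumes r: "rack Y op" and G: "G \<subseteq> Y" and com: "commuting Y op G"
    and u: "u \<in> G" and v: "v \<in> G" and uv: "u \<noteq> v"
    and fixed: "\<forall>a\<in>G - {v}. op a v = v"
  shows "orbit Y op G u \<inter> orbit Y op G v = {}"
proof (rule ccontr)
  assume "orbit Y op G u \<inter> orbit Y op G v \<noteq> {}"
  then obtain z where zu: "z \<in> orbit Y op G u" and zv: "z \<in> orbit Y op G v" by blast
  have same: "op u w = op v w" if "w \<in> Y" for w
    using orbit_translation[OF r G _ _ zu that] orbit_translation[OF r G _ _ zv that]
      u v G com unfolding commuting_def by (metis subsetD)
  have "op v v = v" using same[of v] fixed u v uv G by auto
  then have fixall: "\<forall>a\<in>G. op a v = v" using fixed by blast
  have "z = v" using orbit_of_fixed_point[OF r G fixall zv] by simp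
  then show False using orbit_of_fixed_point[OF r G fixall zu] uv by simp
qed

subsection \<open>Part (i): type D for products\<close>

lemma product_type_D:
  assumes rX: "rack X opX" and rY: "rack Y opY"
    and y: "y1 \<in> Y" "y2 \<in> Y" "y1 \<noteq> y2" "opY y1 y2 = y2"
    and x: "x1 \<in> X" "x2 \<in> X" "opX x1 (opX x2 (opX x1 x2)) \<noteq> x2"
  shows "type_D (X \<times> Y) (prod_op opX opY)"
proof -
  define G where "G = {y1, y2}"
  define A where "A = orbit Y opY G y1"
  define B where "B = orbit Y opY G y2"
  have G: "G \<subseteq> Y" and com: "commuting Y opY G"
    using y commuting_if_fixing[OF rY] unfolding G_def by auto
  have "A \<subseteq> Y" "B \<subseteq> Y" using orbit_subset[OF rY G] unfolding A_def B_def by auto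
  moreover have "y1 \<in> A" "y2 \<in> B" using y unfolding A_def B_def by (auto intro: orbit.base)
  moreover have "A \<inter> B = {}"
    unfolding A_def B_def using orbits_disjoint[OF rY G com] y unfolding G_def by auto
  moreover have "acts_on opY (A \<union> B) A" "acts_on opY (A \<union> B) B"
    using acts_on_Un_left[OF orbits_act_on[OF rY G com] orbits_act_on[OF rY G com]]
    unfolding A_def B_def G_def by auto
  ultimately have "decomposition (X \<times> Y) (prod_op opX opY) (X \<times> A) (X \<times> B)"
    using decomposition_prod[OF rX rY] by blast
  moreover have "(x1, y1) \<in> X \<times> A" "(x2, y2) \<in> X \<times> B" using x \<open>y1 \<in> A\<close> \<open>y2 \<in> B\<close> by auto
  ultimately show ?thesis unfolding type_D_def using x(3) by fastforce
qed

subsection \<open>Part (ii): type F for products\<close>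

lemma product_type_F:
  assumes rX: "rack X opX" and rY: "rack Y opY"
    and iy: "inj_on ys {..<4::nat}" and ysY: "ys ` {..<4} \<subseteq> Y" and xsX: "xs ` {..<4} \<subseteq> X"
    and h: "\<forall>i<4. \<forall>j<4. i \<noteq> j \<longrightarrow> opY (ys i) (ys j) = ys j \<and> opX (xs i) (xs j) \<noteq> xs j"
  shows "type_F (X \<times> Y) (prod_op opX opY)"
proof -
  define G where "G = ys ` {..<4}"
  define Orb where "Orb a = orbit Y opY G (ys a)" for a
  define R where "R a = X \<times> Orb a" for a
  have G: "G \<subseteq> Y" using ysY unfolding G_def .
  have "\<forall>a\<in>G. \<forall>b\<in>G. a \<noteq> b \<longrightarrow> opY a b = b \<or> opY b a = a"
  proof (intro ballI impI)
    fix a b assume "a \<in> G" "b \<in> G" "a \<noteq> b"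
    then obtain i j where "i < 4" "j < 4" "i \<noteq> j" "a = ys i" "b = ys j" unfolding G_def by auto
    then show "opY a b = b \<or> opY b a = a" using h by blast
  qed
  then have com: "commuting Y opY G" using commuting_if_fixing[OF rY G] by blast
  have ysG: "ys a \<in> G" if "a < 4" for a unfolding G_def using that by simp
  have point: "(xs a, ys a) \<in> R a" if "a < 4" for a
    using ysG[OF that] G xsX that unfolding R_def Orb_def by (auto intro: orbit.base)
  have act: "acts_on (prod_op opX opY) (R a) (R b)" if "a < 4" "b < 4" for a b
    using acts_on_prod[OF rX orbits_act_on[OF rY G com ysG[OF that(1)] ysG[OF that(2)]]]
    unfolding R_def Orb_def .
  have sub: "subrack (R a) (X \<times> Y) (prod_op opX opY)" if "a < 4" for a
  proof (rule subrack_of_acts_on[OF rack_prod[OF rX rY] _ _ act[OF that that]])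
    show "R a \<subseteq> X \<times> Y" using orbit_subset[OF rY G] unfolding R_def Orb_def by auto
    show "R a \<noteq> {}" using point[OF that] by blast
  qed
  have dis: "R a \<inter> R b = {}" if ab: "a < 4" "b < 4" "a \<noteq> b" for a b
  proof -
    have "ys a \<noteq> ys b" using iy ab by (auto dest: inj_onD)
    moreover have "\<forall>g\<in>G - {ys b}. opY g (ys b) = ys b" using h ab(2) unfolding G_def by auto
    ultimately have "Orb a \<inter> Orb b = {}"
      using orbits_disjoint[OF rY G com ysG[OF ab(1)] ysG[OF ab(2)]] unfolding Orb_def by blast
    then show ?thesis unfolding R_def by auto
  qed
  have act_set: "act_set (prod_op opX opY) (R a) (R b) = R b" if "a < 4" "b < 4" for a b
    using act_set_acts_on[OF _ act[OF that]] point[OF that(1)] by blast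
  have moves: "prod_op opX opY (xs a, ys a) (xs b, ys b) \<noteq> (xs b, ys b)"
    if "a < 4" "b < 4" "a \<noteq> b" for a b
    using h that by simp
  show ?thesis unfolding type_F_def
    using sub point dis act_set moves by (intro exI[of _ R] exI[of _ "\<lambda>a. (xs a, ys a)"]) blast
qed

subsection \<open>Part (iii): type D for the doubled rack\<close>

lemma bij_betw_conjugate:
  assumes "bij_betw \<phi> X X1" "bij_betw g X X" "\<forall>y\<in>X. f (\<phi> y) = \<phi> (g y)"
  shows "bij_betw f X1 X1"
proof -
  have "bij_betw (\<phi> \<circ> g) X X1" using bij_betw_trans assms(1,2) by blast
  then have "bij_betw (f \<circ> \<phi>) X X1" using bij_betw_cong[of X "f \<circ> \<phi>" "\<phi> \<circ> g" X1] assms(3) by simp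
  then show ?thesis using bij_betw_comp_iff[OF assms(1)] by blast
qed

lemma doubling_type_D:
  assumes rX: "rack X opX" and b1: "bij_betw \<phi>1 X X1" and b2: "bij_betw \<phi>2 X X2"
    and dis: "X1 \<inter> X2 = {}"
    and E: "\<forall>x\<in>X. \<forall>y\<in>X.
            op2 (\<phi>1 x) (\<phi>1 y) = \<phi>1 (opX x y) \<and> op2 (\<phi>1 x) (\<phi>2 y) = \<phi>2 (opX x y) \<and>
            op2 (\<phi>2 x) (\<phi>1 y) = \<phi>1 (opX x y) \<and> op2 (\<phi>2 x) (\<phi>2 y) = \<phi>2 (opX x y)"
    and x1: "x1 \<in> X" and x2: "x2 \<in> X" and nd: "opX x1 (opX x2 (opX x1 x2)) \<noteq> x2"
  shows "type_D (X1 \<union> X2) op2"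
proof -
  have X1: "X1 = \<phi>1 ` X" and X2: "X2 = \<phi>2 ` X" using b1 b2 bij_betw_imp_surj_on by metis+
  have rep: "p \<in> X1 \<union> X2 \<Longrightarrow> \<exists>x\<in>X. p = \<phi>1 x \<or> p = \<phi>2 x" for p using X1 X2 by blast
  have key: "p \<in> X1 \<union> X2 \<Longrightarrow>
      \<exists>x\<in>X. \<forall>y\<in>X. op2 p (\<phi>1 y) = \<phi>1 (opX x y) \<and> op2 p (\<phi>2 y) = \<phi>2 (opX x y)" for p
    using rep E by metis
  have "bij_betw (op2 p) X1 X1 \<and> bij_betw (op2 p) X2 X2" if p: "p \<in> X1 \<union> X2" for p
  proof -
    obtain x where x: "x \<in> X"
      and tr: "\<forall>y\<in>X. op2 p (\<phi>1 y) = \<phi>1 (opX x y) \<and> op2 p (\<phi>2 y) = \<phi>2 (opX x y)"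
      using key[OF p] by blast
    show ?thesis
      using bij_betw_conjugate[OF b1 rack_bij[OF rX x]] bij_betw_conjugate[OF b2 rack_bij[OF rX x]] tr
      by blast
  qed
  then have act: "acts_on op2 (X1 \<union> X2) X1" "acts_on op2 (X1 \<union> X2) X2"
    unfolding acts_on_def by auto
  have sd: "\<forall>a\<in>X1 \<union> X2. \<forall>b\<in>X1 \<union> X2. \<forall>c\<in>X1 \<union> X2. op2 a (op2 b c) = op2 (op2 a b) (op2 a c)"
  proof (intro ballI)
    fix a b c assume "a \<in> X1 \<union> X2" "b \<in> X1 \<union> X2" "c \<in> X1 \<union> X2"
    then obtain x y z where xyz: "x \<in> X" "y \<in> X" "z \<in> X"
      and a: "a = \<phi>1 x \<or> a = \<phi>2 x" and b: "b = \<phi>1 y \<or> b = \<phi>2 y" and c: "c = \<phi>1 z \<or> c = \<phi>2 z"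
      using rep by metis
    have cl: "opX x y \<in> X" "opX x z \<in> X" "opX y z \<in> X" using rack_closed[OF rX] xyz by auto
    show "op2 a (op2 b c) = op2 (op2 a b) (op2 a c)"
      using a b c E xyz cl rack_self_distrib[OF rX xyz] by (elim disjE) simp_all
  qed
  have ne: "\<phi>1 x1 \<in> X1" "\<phi>2 x2 \<in> X2" using X1 X2 x1 x2 by auto
  have "rack (X1 \<union> X2) op2"
  proof (rule rack_intro[OF _ _ sd])
    show "X1 \<union> X2 \<noteq> {}" using ne by blast
    show "\<forall>p\<in>X1 \<union> X2. bij_betw (op2 p) (X1 \<union> X2) (X1 \<union> X2)"
      using acts_on_Un_right[OF act dis] unfolding acts_on_def .
  qed
  then have "decomposition (X1 \<union> X2) op2 X1 X2"
    by (rule decomposition_intro[OF _ _ _ _ _ dis act]) (use ne in auto)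
  moreover have "op2 (\<phi>1 x1) (op2 (\<phi>2 x2) (op2 (\<phi>1 x1) (\<phi>2 x2))) \<noteq> \<phi>2 x2"
  proof -
    have cl: "opX x1 x2 \<in> X" "opX x2 (opX x1 x2) \<in> X" "opX x1 (opX x2 (opX x1 x2)) \<in> X"
      using rack_closed[OF rX] x1 x2 by auto
    then have "op2 (\<phi>1 x1) (op2 (\<phi>2 x2) (op2 (\<phi>1 x1) (\<phi>2 x2))) = \<phi>2 (opX x1 (opX x2 (opX x1 x2)))"
      using x1 x2 E by simp
    then show ?thesis using nd cl x2 bij_betw_imp_inj_on[OF b2] by (metis inj_onD)
  qed
  ultimately show ?thesis unfolding type_D_def using ne by blast
qed

theorem mainTheorem4:
  fixes X :: "'a set" and opX :: "'a \<Rightarrow> 'a \<Rightarrow> 'a"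
    and Y :: "'b set" and opY :: "'b \<Rightarrow> 'b \<Rightarrow> 'b"
  assumes rX: "rack X opX" and rY: "rack Y opY"
  shows
   "((\<exists>y1\<in>Y. \<exists>y2\<in>Y. \<exists>x1\<in>X. \<exists>x2\<in>X. y1 \<noteq> y2 \<and> x1 \<noteq> x2 \<and> opY y1 y2 = y2 \<and>
        opX x1 (opX x2 (opX x1 x2)) \<noteq> x2)
      \<longrightarrow> type_D (X \<times> Y) (prod_op opX opY))
  \<and> ((\<exists>(ys :: nat \<Rightarrow> 'b) (xs :: nat \<Rightarrow> 'a).
        inj_on ys {..<4} \<and> inj_on xs {..<4} \<and> ys ` {..<4} \<subseteq> Y \<and> xs ` {..<4} \<subseteq> X \<and>
        (\<forall>i<4. \<forall>j<4. i \<noteq> j \<longrightarrow> opY (ys i) (ys j) = ys j \<and> opX (xs i) (xs j) \<noteq> xs j))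
      \<longrightarrow> type_F (X \<times> Y) (prod_op opX opY))
  \<and> (\<forall>(\<phi>1 :: 'a \<Rightarrow> 'c) \<phi>2 X1 X2 (op2 :: 'c \<Rightarrow> 'c \<Rightarrow> 'c).
        bij_betw \<phi>1 X X1 \<and> bij_betw \<phi>2 X X2 \<and> X1 \<inter> X2 = {} \<and>
        (\<forall>x\<in>X. \<forall>y\<in>X.
            op2 (\<phi>1 x) (\<phi>1 y) = \<phi>1 (opX x y) \<and> op2 (\<phi>1 x) (\<phi>2 y) = \<phi>2 (opX x y) \<and>
            op2 (\<phi>2 x) (\<phi>1 y) = \<phi>1 (opX x y) \<and> op2 (\<phi>2 x) (\<phi>2 y) = \<phi>2 (opX x y)) \<and>
        (\<exists>x1\<in>X. \<exists>x2\<in>X. x1 \<noteq> x2 \<and> opX x1 (opX x2 (opX x1 x2)) \<noteq> x2)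
      \<longrightarrow> type_D (X1 \<union> X2) op2)"
proof (intro conjI impI allI)
  show "type_D (X \<times> Y) (prod_op opX opY)"
    if "\<exists>y1\<in>Y. \<exists>y2\<in>Y. \<exists>x1\<in>X. \<exists>x2\<in>X. y1 \<noteq> y2 \<and> x1 \<noteq> x2 \<and> opY y1 y2 = y2 \<and>
        opX x1 (opX x2 (opX x1 x2)) \<noteq> x2"
    using that by (elim bexE conjE) (rule product_type_D[OF rX rY]; assumption)
  show "type_F (X \<times> Y) (prod_op opX opY)"
    if "\<exists>(ys :: nat \<Rightarrow> 'b) (xs :: nat \<Rightarrow> 'a).
        inj_on ys {..<4} \<and> inj_on xs {..<4} \<and> ys ` {..<4} \<subseteq> Y \<and> xs ` {..<4} \<subseteq> X \<and>
        (\<forall>i<4. \<forall>j<4. i \<noteq> j \<longrightarrow> opY (ys i) (ys j) = ys j \<and> opX (xs i) (xs j) \<noteq> xs j)"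
    using that by (elim exE conjE) (rule product_type_F[OF rX rY]; assumption)
  fix \<phi>1 :: "'a \<Rightarrow> 'c" and \<phi>2 X1 X2 and op2 :: "'c \<Rightarrow> 'c \<Rightarrow> 'c"
  assume "bij_betw \<phi>1 X X1 \<and> bij_betw \<phi>2 X X2 \<and> X1 \<inter> X2 = {} \<and>
        (\<forall>x\<in>X. \<forall>y\<in>X.
            op2 (\<phi>1 x) (\<phi>1 y) = \<phi>1 (opX x y) \<and> op2 (\<phi>1 x) (\<phi>2 y) = \<phi>2 (opX x y) \<and>
            op2 (\<phi>2 x) (\<phi>1 y) = \<phi>1 (opX x y) \<and> op2 (\<phi>2 x) (\<phi>2 y) = \<phi>2 (opX x y)) \<and>
        (\<exists>x1\<in>X. \<exists>x2\<in>X. x1 \<noteq> x2 \<and> opX x1 (opX x2 (opX x1 x2)) \<noteq> x2)"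
  then show "type_D (X1 \<union> X2) op2"
    by (elim bexE conjE) (rule doubling_type_D[OF rX]; assumption)
qed

end
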